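(* Let $a\ge b\ge1$ be integers and define $c_j,d_j$ ($j\in\mathbb Z_+$) by $c_0=d_0=0$, $c_1=d_1=1$, $c_{k+2}+c_k=a d_{k+1}$, $d_{k+2}+d_k=b c_{k+1}$. Then the inequalities $$bc_k^2+ad_{k+1}^2-abc_kd_{k+1}+abc_k-2ad_{k+1}+a\le0$$ and $$bc_{k+1}^2+ad_k^2-abd_kc_{k+1}-2bc_{k+1}+abd_k+b\le0$$ hold (1) for all $k\ge1$ if $b\ge2$, and (2) for all $k\ge2$ if $b=1$ and $a\ge5$.
   Context: $\mathbb Z_+=\{0,1,2,\dots\}$. *)

theory Defs
  imports Main
begin

fun cd_seq :: "int \<Rightarrow> int \<Rightarrow> nat \<Rightarrow> int \<times> int" where
  "cd_seq a b 0 = (0, 0)"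
| "cd_seq a b (Suc 0) = (1, 1)"
| "cd_seq a b (Suc (Suc k)) =
     (a * snd (cd_seq a b (Suc k)) - fst (cd_seq a b k),
      b * fst (cd_seq a b (Suc k)) - snd (cd_seq a b k))"

definition cseq :: "int \<Rightarrow> int \<Rightarrow> nat \<Rightarrow> int" where
  "cseq a b k = fst (cd_seq a b k)"

definition dseq :: "int \<Rightarrow> int \<Rightarrow> nat \<Rightarrow> int" where
  "dseq a b k = snd (cd_seq a b k)"

lemma cseq_dseq_rec:
  "cseq a b 0 = 0" "dseq a b 0 = 0" "cseq a b 1 = 1" "dseq a b 1 = 1"
  "cseq a b (k + 2) + cseq a b k = a * dseq a b (k + 1)"
  "dseq a b (k + 2) + dseq a b k = b * cseq a b (k + 1)"
  by (simp_all add: cseq_def dseq_def)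

end

theory Submission
  imports Defs
begin

(*
  The quadratic part b c_k^2 + a d_(k+1)^2 - a b c_k d_(k+1) is invariant under k -> k + 2,
  so it equals a for even k and b for odd k.  The first inequality therefore says that the
  linear part g_k = 2 a d_(k+1) - a b c_k is at least 2 a for even k and at least a + b for
  odd k.  Both c and d, hence g, satisfy x_(k+4) = (a b - 2) x_(k+2) - x_k, and since
  a b - 2 >= 2 each parity class of g is nondecreasing as soon as its first two terms are;
  here g_0 = 2 a, g_1 = a b, g_2 = a (a b - 2), g_3 = a b (a b - 3).  The second inequality
  is the first one with the roles of (a, c) and (b, d) exchanged.
*)

lemma cseq_Suc_Suc: "cseq a b (Suc (Suc k)) = a * dseq a b (Suc k) - cseq a b k"
  by (simp add: cseq_def dseq_def)

lemma dseq_Suc_Suc: "dseq a b (Suc (Suc k)) = b * cseq a b (Suc k) - dseq a b k"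
  by (simp add: cseq_def dseq_def)

lemma cd_seq_swap: "cd_seq b a k = prod.swap (cd_seq a b k)"
  by (induction a b k rule: cd_seq.induct) auto

lemma cseq_swap: "cseq b a = dseq a b"
  and dseq_swap: "dseq b a = cseq a b"
  by (simp_all add: fun_eq_iff cseq_def dseq_def cd_seq_swap[of a b])

lemma cseq_dseq_quadratic_invariant:
  "b * (cseq a b k)^2 + a * (dseq a b (k + 1))^2 - a * b * cseq a b k * dseq a b (k + 1)
     = (if even k then a else b)"
proof (induction k rule: nat_induct2)
  case (step k)
  then show ?case
    by (simp add: cseq_Suc_Suc dseq_Suc_Suc power2_eq_square algebra_simps)
qed (simp_all add: cseq_dseq_rec eval_nat_numeral cseq_def dseq_def power2_eq_square)

lemma mono_if_linear_recurrence:
  fixes L :: "nat \<Rightarrow> 'a :: linordered_idom"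
  assumes rec: "\<And>n. L (n + 2) = m * L (n + 1) - L n" and "2 \<le> m" and "0 \<le> L 0" "L 0 \<le> L 1"
  shows "mono L"
proof -
  have "0 \<le> L n \<and> L n \<le> L (Suc n)" for n
  proof (induction n)
    case (Suc n)
    have "L (Suc (Suc n)) - L (Suc n) = (m - 2) * L (Suc n) + (L (Suc n) - L n)"
      using rec[of n] by (simp add: algebra_simps)
    moreover have "0 \<le> (m - 2) * L (Suc n)"
      using Suc.IH \<open>2 \<le> m\<close> by simp
    ultimately show ?case using Suc.IH by linarith
  qed (use assms in simp)
  then show ?thesis by (simp add: mono_iff_le_Suc)
qed

definition cd_gap :: "int \<Rightarrow> int \<Rightarrow> nat \<Rightarrow> int" where
  "cd_gap a b k = 2 * a * dseq a b (k + 1) - a * b * cseq a b k"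

lemma cd_gap_recurrence: "cd_gap a b (k + 4) = (a * b - 2) * cd_gap a b (k + 2) - cd_gap a b k"
  by (simp add: cd_gap_def eval_nat_numeral cseq_Suc_Suc dseq_Suc_Suc algebra_simps)

lemma cd_gap_initial_values:
  "cd_gap a b 0 = 2 * a" "cd_gap a b 1 = a * b"
  "cd_gap a b 2 = a * (a * b - 2)" "cd_gap a b 3 = a * b * (a * b - 3)"
  by (simp_all add: cd_gap_def eval_nat_numeral cseq_Suc_Suc dseq_Suc_Suc cseq_def dseq_def algebra_simps)

lemma mono_cd_gap_parity_classes:
  assumes "0 \<le> a" "4 \<le> a * b"
  shows "mono (\<lambda>n. cd_gap a b (2 * n))" "mono (\<lambda>n. cd_gap a b (2 * n + 1))"
proof -
  have rec: "cd_gap a b (2 * (n + 2) + j)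
      = (a * b - 2) * cd_gap a b (2 * (n + 1) + j) - cd_gap a b (2 * n + j)" for n j
  proof -
    have "2 * (n + 2) + j = (2 * n + j) + 4" "2 * (n + 1) + j = (2 * n + j) + 2" by simp_all
    then show ?thesis by (simp only: cd_gap_recurrence)
  qed
  have "a * 2 \<le> a * (a * b - 2)" "a * b * 1 \<le> a * b * (a * b - 3)"
    using assms by (intro mult_left_mono; simp)+
  then show "mono (\<lambda>n. cd_gap a b (2 * n))" "mono (\<lambda>n. cd_gap a b (2 * n + 1))"
    using rec[where j = 0] rec[where j = 1] assms
    by (auto intro!: mono_if_linear_recurrence[where m = "a * b - 2"]
        simp: cd_gap_initial_values[simplified])
qed

lemma cd_gap_even_lower_bound:
  assumes "0 \<le> a" "4 \<le> a * b"
  shows "2 * a \<le> cd_gap a b (2 * n)"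
  using monoD[OF mono_cd_gap_parity_classes(1)[OF assms], of 0 n]
  by (simp add: cd_gap_initial_values)

lemma cd_gap_odd_lower_bound:
  assumes "(2 \<le> a \<and> 2 \<le> b) \<or> (1 \<le> a \<and> 1 \<le> b \<and> 5 \<le> a * b \<and> 1 \<le> n)"
  shows "a + b \<le> cd_gap a b (2 * n + 1)"
  using assms
proof
  assume ab: "2 \<le> a \<and> 2 \<le> b"
  have "4 \<le> a * b" using mult_mono[of 2 a 2 b] ab by simp
  moreover have "1 \<le> (a - 1) * (b - 1)" using mult_mono[of 1 "a - 1" 1 "b - 1"] ab by simp
  ultimately show ?thesis
    using monoD[OF mono_cd_gap_parity_classes(2), of a b 0 n] ab
    by (simp add: cd_gap_initial_values[simplified] algebra_simps)
next
  assume ab: "1 \<le> a \<and> 1 \<le> b \<and> 5 \<le> a * b \<and> 1 \<le> n"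
  have "a * b * (a * b - 3) \<le> cd_gap a b (2 * n + 1)"
    using monoD[OF mono_cd_gap_parity_classes(2), of a b 1 n] ab by (simp add: cd_gap_initial_values)
  moreover have "a * b * 2 \<le> a * b * (a * b - 3)" using ab by (intro mult_left_mono) auto
  moreover have "a \<le> a * b" "b \<le> a * b" using ab by simp_all
  ultimately show ?thesis by linarith
qed

lemma cseq_dseq_first_inequality:
  assumes "(2 \<le> a \<and> 2 \<le> b \<and> 1 \<le> k) \<or> (1 \<le> a \<and> 1 \<le> b \<and> 5 \<le> a * b \<and> 2 \<le> k)"
  shows "b * (cseq a b k)^2 + a * (dseq a b (k + 1))^2 - a * b * cseq a b k * dseq a b (k + 1)
           + a * b * cseq a b k - 2 * a * dseq a b (k + 1) + a \<le> 0"
proof -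
  have lhs: "b * (cseq a b k)^2 + a * (dseq a b (k + 1))^2 - a * b * cseq a b k * dseq a b (k + 1)
           + a * b * cseq a b k - 2 * a * dseq a b (k + 1) + a = (if even k then a else b) + a - cd_gap a b k"
    using cseq_dseq_quadratic_invariant[of b a k] by (simp add: cd_gap_def)
  show ?thesis
  proof (cases "even k")
    case True
    then obtain n where "k = 2 * n" by blast
    moreover have "0 \<le> a" "4 \<le> a * b" using assms mult_mono[of 2 a 2 b] by auto
    ultimately show ?thesis using cd_gap_even_lower_bound[of a b n] lhs True by simp
  next
    case False
    then obtain n where "k = 2 * n + 1" using oddE by blast
    with assms have "a + b \<le> cd_gap a b k" using cd_gap_odd_lower_bound[of a b n] by auto
    with lhs False show ?thesis by simp
  qed
qed

theorem lemma3p5: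
  fixes a b :: int
  assumes "a \<ge> b" and "b \<ge> 1"
  defines "c \<equiv> cseq a b" and "d \<equiv> dseq a b"
  shows "\<forall>k::nat. ((b \<ge> 2 \<and> k \<ge> 1) \<or> (b = 1 \<and> a \<ge> 5 \<and> k \<ge> 2)) \<longrightarrow>
     b * (c k)^2 + a * (d (k+1))^2 - a * b * c k * d (k+1) + a * b * c k - 2 * a * d (k+1) + a \<le> 0
   \<and> b * (c (k+1))^2 + a * (d k)^2 - a * b * d k * c (k+1) - 2 * b * c (k+1) + a * b * d k + b \<le> 0"
proof (intro allI impI)
  fix k :: nat
  assume "(b \<ge> 2 \<and> k \<ge> 1) \<or> (b = 1 \<and> a \<ge> 5 \<and> k \<ge> 2)"
  then have hyp: "(2 \<le> a \<and> 2 \<le> b \<and> 1 \<le> k) \<or> (1 \<le> a \<and> 1 \<le> b \<and> 5 \<le> a * b \<and> 2 \<le> k)"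
    using assms(1,2) by (elim disjE) simp_all
  then have hyp': "(2 \<le> b \<and> 2 \<le> a \<and> 1 \<le> k) \<or> (1 \<le> b \<and> 1 \<le> a \<and> 5 \<le> b * a \<and> 2 \<le> k)"
    unfolding mult.commute[of b a] by blast
  \<comment> \<open>The swap rules are instantiated because together they rewrite in a loop.\<close>
  have "b * (c (k+1))^2 + a * (d k)^2 - a * b * d k * c (k+1) - 2 * b * c (k+1) + a * b * d k + b \<le> 0"
    using cseq_dseq_first_inequality[OF hyp']
    unfolding c_def d_def cseq_swap[where a = a and b = b] dseq_swap[where a = a and b = b]
      mult.commute[of b a]
    by linarith
  with cseq_dseq_first_inequality[OF hyp]
  show "b * (c k)^2 + a * (d (k+1))^2 - a * b * c k * d (k+1) + a * b * c k - 2 * a * d (k+1) + a \<le> 0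
   \<and> b * (c (k+1))^2 + a * (d k)^2 - a * b * d k * c (k+1) - 2 * b * c (k+1) + a * b * d k + b \<le> 0"
    unfolding c_def d_def by blast
qed

end
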